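(* Consider a homogeneous weighted stochastic block model with two communities, each of size $n$, where each pair of vertices independently receives a weight distributed as $p_n$ if both endpoints lie in the same community and as $q_n$ otherwise. Let $I$ be the Renyi divergence of order $\tfrac12$ between $p_n$ and $q_n$. If \[ \liminf_{n\to\infty}\frac{nI}{\log n}>1, \] then the maximum likelihood estimator of the community assignment recovers the true communities with probability converging to $1$ as $n\to\infty$.
   Context: The Renyi divergence of order $\tfrac12$ is $I=-2\log\int\sqrt{p_n(x)q_n(x)}\,dx$ for continuous distributions on $\mathbb{R}$ and $I=-2\log\sum_{\ell\ge0}\sqrt{p_n(\ell)q_n(\ell)}$ for discrete distributions on $\mathbb{N}$. *)

theory Defs
  imports "HOL-Probability.Probability"
begin

text \<open>Vertices are 0,...,2n-1. A community assignment is given by the set S of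
vertices in the first community; S is balanced if card S = n.\<close>

definition pairs :: "nat \<Rightarrow> (nat \<times> nat) set" where
  "pairs n = {(i, j). i < j \<and> j < 2 * n}"

definition balanced :: "nat \<Rightarrow> nat set set" where
  "balanced n = {S. S \<subseteq> {..<2 * n} \<and> card S = n}"

definition same_comm :: "nat set \<Rightarrow> nat \<times> nat \<Rightarrow> bool" where
  "same_comm S e \<longleftrightarrow> (fst e \<in> S \<longleftrightarrow> snd e \<in> S)"

definition wsbm :: "'a measure \<Rightarrow> ('a \<Rightarrow> real) \<Rightarrow> ('a \<Rightarrow> real) \<Rightarrow> nat \<Rightarrow> nat set
    \<Rightarrow> (nat \<times> nat \<Rightarrow> 'a) measure" where
  "wsbm M p q n S = (\<Pi>\<^sub>M e\<in>pairs n.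
      density M (\<lambda>x. ennreal (if same_comm S e then p x else q x)))"

definition likelihood :: "('a \<Rightarrow> real) \<Rightarrow> ('a \<Rightarrow> real) \<Rightarrow> nat \<Rightarrow> nat set
    \<Rightarrow> (nat \<times> nat \<Rightarrow> 'a) \<Rightarrow> real" where
  "likelihood p q n S w = (\<Prod>e\<in>pairs n. if same_comm S e then p (w e) else q (w e))"

definition mle_set :: "('a \<Rightarrow> real) \<Rightarrow> ('a \<Rightarrow> real) \<Rightarrow> nat
    \<Rightarrow> (nat \<times> nat \<Rightarrow> 'a) \<Rightarrow> nat set set" where
  "mle_set p q n w = {S \<in> balanced n. \<forall>T \<in> balanced n. likelihood p q n T w \<le> likelihood p q n S w}"

text \<open>The MLE recovers the communities: the maximizers are exactly the true
partition (up to swapping the two labels).\<close>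
definition mle_recovers :: "('a \<Rightarrow> real) \<Rightarrow> ('a \<Rightarrow> real) \<Rightarrow> nat \<Rightarrow> nat set
    \<Rightarrow> (nat \<times> nat \<Rightarrow> 'a) \<Rightarrow> bool" where
  "mle_recovers p q n S w \<longleftrightarrow> mle_set p q n w = {S, {..<2 * n} - S}"

definition bhattacharyya :: "'a measure \<Rightarrow> ('a \<Rightarrow> real) \<Rightarrow> ('a \<Rightarrow> real) \<Rightarrow> real" where
  "bhattacharyya M p q = (LINT x|M. sqrt (p x * q x))"

definition renyi_half :: "'a measure \<Rightarrow> ('a \<Rightarrow> real) \<Rightarrow> ('a \<Rightarrow> real) \<Rightarrow> ereal" where
  "renyi_half M p q = (if bhattacharyya M p q = 0 then \<infinity>
     else ereal (- 2 * ln (bhattacharyya M p q)))"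

end

theory Submission
  imports Defs
begin

text \<open>The MLE fails only if some balanced T other than S and its complement is at least as
likely as S. As T and its complement have the same likelihood, we may assume that
k = |S - T| satisfies 1 <= k <= n/2. Then S and T disagree on at least 4k(n - k) pairs, and
the Chernoff bound with exponent 1/2 (on the event, L_T >= L_S gives L_S <= sqrt (L_S L_T))
bounds the probability of this event by B^(4k(n - k)), where B is the Bhattacharyya
coefficient. There are at most (n choose k)^2 such T, so the failure probability is at most
the sum over k of (n choose k)^2 B^(4k(n - k)). The hypothesis gives B <= n^(-c/(2n))
eventually for some c > 1; for k <= eps n the terms are then at most n^(-2dk) with d > 0,
and for larger k at most (4 n^(-c eps))^n, so the sum tends to 0.\<close>

definition prob_density :: "'a measure \<Rightarrow> ('a \<Rightarrow> real) \<Rightarrow> bool" where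
  "prob_density M p \<longleftrightarrow>
     p \<in> borel_measurable M \<and> (\<forall>x. 0 \<le> p x) \<and> (\<integral>\<^sup>+ x. ennreal (p x) \<partial>M) = 1"

lemma prob_densityD:
  assumes "prob_density M p"
  shows "p \<in> borel_measurable M" and "0 \<le> p x" and "(\<integral>\<^sup>+ x. ennreal (p x) \<partial>M) = 1"
  using assms by (auto simp: prob_density_def)

lemma PiM_density_eq_density_PiM:
  fixes f :: "'i \<Rightarrow> 'a \<Rightarrow> real"
  assumes "sigma_finite_measure M" and "finite I"
    and [measurable]: "\<And>i. f i \<in> borel_measurable M"
    and f_nonneg: "\<And>i x. 0 \<le> f i x"
  shows "PiM I (\<lambda>i. density M (\<lambda>x. ennreal (f i x)))
       = density (PiM I (\<lambda>_. M)) (\<lambda>w. ennreal (\<Prod>i\<in>I. f i (w i)))"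
proof -
  interpret M: sigma_finite_measure M by fact
  interpret PM: product_sigma_finite "\<lambda>_. M" by standard
  interpret PD: product_sigma_finite "\<lambda>i. density M (\<lambda>x. ennreal (f i x))"
    unfolding product_sigma_finite_def by (auto simp: M.sigma_finite_iff_density_finite)
  show ?thesis
  proof (rule PD.PiM_eqI[symmetric, OF \<open>finite I\<close>])
    show "sets (density (PiM I (\<lambda>_. M)) (\<lambda>w. ennreal (\<Prod>i\<in>I. f i (w i)))) =
          sets (PiM I (\<lambda>i. density M (\<lambda>x. ennreal (f i x))))"
      by (auto intro!: sets_PiM_cong)
  next
    fix A assume "\<And>i. i \<in> I \<Longrightarrow> A i \<in> sets (density M (\<lambda>x. ennreal (f i x)))"
    then have A: "\<And>i. i \<in> I \<Longrightarrow> A i \<in> sets M" by auto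
    have "emeasure (density (PiM I (\<lambda>_. M)) (\<lambda>w. ennreal (\<Prod>i\<in>I. f i (w i)))) (Pi\<^sub>E I A)
        = (\<integral>\<^sup>+ w. ennreal (\<Prod>i\<in>I. f i (w i)) * indicator (Pi\<^sub>E I A) w \<partial>PiM I (\<lambda>_. M))"
      using A \<open>finite I\<close> by (intro emeasure_density) (auto intro!: sets_PiM_I_finite)
    also have "\<dots> = (\<integral>\<^sup>+ w. (\<Prod>i\<in>I. ennreal (f i (w i)) * indicator (A i) (w i)) \<partial>PiM I (\<lambda>_. M))"
    proof (rule nn_integral_cong)
      fix w assume "w \<in> space (PiM I (\<lambda>_. M))"
      then have "indicator (Pi\<^sub>E I A) w = (\<Prod>i\<in>I. indicator (A i) (w i) :: ennreal)"
        using \<open>finite I\<close>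
        by (auto simp: space_PiM indicator_def PiE_def Pi_def prod_zero_iff intro!: prod.neutral)
      then show "ennreal (\<Prod>i\<in>I. f i (w i)) * indicator (Pi\<^sub>E I A) w
          = (\<Prod>i\<in>I. ennreal (f i (w i)) * indicator (A i) (w i))"
        using f_nonneg by (simp add: prod_ennreal prod.distrib)
    qed
    also have "\<dots> = (\<Prod>i\<in>I. \<integral>\<^sup>+ x. ennreal (f i x) * indicator (A i) x \<partial>M)"
      by (intro PM.product_nn_integral_prod \<open>finite I\<close>) (use A in measurable)
    also have "\<dots> = (\<Prod>i\<in>I. emeasure (density M (\<lambda>x. ennreal (f i x))) (A i))"
      using A by (intro prod.cong) (auto simp: emeasure_density)
    finally show "emeasure (density (PiM I (\<lambda>_. M)) (\<lambda>w. ennreal (\<Prod>i\<in>I. f i (w i)))) (Pi\<^sub>E I A)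
        = (\<Prod>i\<in>I. emeasure (density M (\<lambda>x. ennreal (f i x))) (A i))" .
  qed
qed

lemma emeasure_density_le_nn_integral_sqrt:
  fixes f g :: "'a \<Rightarrow> real"
  assumes [measurable]: "f \<in> borel_measurable N" "g \<in> borel_measurable N"
    and f_nonneg: "\<And>x. 0 \<le> f x"
  shows "emeasure (density N (\<lambda>x. ennreal (f x))) {x \<in> space N. f x \<le> g x}
      \<le> (\<integral>\<^sup>+ x. ennreal (sqrt (f x * g x)) \<partial>N)"
proof -
  have "emeasure (density N (\<lambda>x. ennreal (f x))) {x \<in> space N. f x \<le> g x}
      = (\<integral>\<^sup>+ x. ennreal (f x) * indicator {x \<in> space N. f x \<le> g x} x \<partial>N)"
    by (rule emeasure_density) measurable
  also have "\<dots> \<le> (\<integral>\<^sup>+ x. ennreal (sqrt (f x * g x)) \<partial>N)"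
  proof (rule nn_integral_mono)
    fix x
    have "f x \<le> sqrt (f x * g x)" if "f x \<le> g x"
    proof -
      have "f x = sqrt (f x * f x)" using f_nonneg[of x] by simp
      also have "\<dots> \<le> sqrt (f x * g x)"
        using that f_nonneg[of x] by (intro real_sqrt_le_mono mult_left_mono)
      finally show ?thesis .
    qed
    then show "ennreal (f x) * indicator {x \<in> space N. f x \<le> g x} x \<le> ennreal (sqrt (f x * g x))"
      by (auto simp: indicator_def intro: ennreal_leI)
  qed
  finally show ?thesis .
qed

lemma real_sqrt_prod: "sqrt (\<Prod>i\<in>I. f i) = (\<Prod>i\<in>I. sqrt (f i))"
  by (induction I rule: infinite_finite_induct) (auto simp: real_sqrt_mult)

lemma emeasure_PiM_density_prod_le_prod_sqrt:
  fixes a b :: "'i \<Rightarrow> 'a \<Rightarrow> real"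
  assumes "sigma_finite_measure M" and "finite I"
    and [measurable]: "\<And>i. a i \<in> borel_measurable M" "\<And>i. b i \<in> borel_measurable M"
    and a_nonneg: "\<And>i x. 0 \<le> a i x" and b_nonneg: "\<And>i x. 0 \<le> b i x"
  shows "emeasure (PiM I (\<lambda>i. density M (\<lambda>x. ennreal (a i x))))
     {w \<in> space (PiM I (\<lambda>i. density M (\<lambda>x. ennreal (a i x)))). (\<Prod>i\<in>I. a i (w i)) \<le> (\<Prod>i\<in>I. b i (w i))}
     \<le> (\<Prod>i\<in>I. \<integral>\<^sup>+ x. ennreal (sqrt (a i x * b i x)) \<partial>M)"
proof -
  interpret M: sigma_finite_measure M by fact
  interpret PM: product_sigma_finite "\<lambda>_. M" by standard
  have "emeasure (PiM I (\<lambda>i. density M (\<lambda>x. ennreal (a i x))))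
     {w \<in> space (PiM I (\<lambda>i. density M (\<lambda>x. ennreal (a i x)))). (\<Prod>i\<in>I. a i (w i)) \<le> (\<Prod>i\<in>I. b i (w i))}
     \<le> (\<integral>\<^sup>+ w. ennreal (sqrt ((\<Prod>i\<in>I. a i (w i)) * (\<Prod>i\<in>I. b i (w i)))) \<partial>PiM I (\<lambda>_. M))"
    unfolding PiM_density_eq_density_PiM[OF assms(1-3) a_nonneg] space_density
    by (rule emeasure_density_le_nn_integral_sqrt) (auto intro: prod_nonneg a_nonneg)
  also have "\<dots> = (\<integral>\<^sup>+ w. (\<Prod>i\<in>I. ennreal (sqrt (a i (w i) * b i (w i)))) \<partial>PiM I (\<lambda>_. M))"
    using a_nonneg b_nonneg by (simp add: real_sqrt_prod[symmetric] prod.distrib prod_ennreal)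
  also have "\<dots> = (\<Prod>i\<in>I. \<integral>\<^sup>+ x. ennreal (sqrt (a i x * b i x)) \<partial>M)"
    by (intro PM.product_nn_integral_prod \<open>finite I\<close>) measurable
  finally show ?thesis .
qed

lemma nn_integral_sqrt_le_1:
  assumes "prob_density M p" and "prob_density M q"
  shows "(\<integral>\<^sup>+ x. ennreal (sqrt (p x * q x)) \<partial>M) \<le> 1"
proof -
  note p = prob_densityD[OF assms(1)] and q = prob_densityD[OF assms(2)]
  have "(\<integral>\<^sup>+ x. ennreal (sqrt (p x * q x)) \<partial>M) \<le> (\<integral>\<^sup>+ x. (ennreal (p x) + ennreal (q x)) / 2 \<partial>M)"
  proof (rule nn_integral_mono)
    fix x
    have "ennreal (sqrt (p x * q x)) \<le> ennreal ((p x + q x) / 2)"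
      using p(2) q(2) by (intro ennreal_leI arith_geo_mean_sqrt)
    also have "\<dots> = (ennreal (p x) + ennreal (q x)) / 2"
      using p(2) q(2)
      by (simp add: ennreal_plus[symmetric] divide_ennreal[symmetric] del: ennreal_plus)
    finally show "ennreal (sqrt (p x * q x)) \<le> (ennreal (p x) + ennreal (q x)) / 2" .
  qed
  also have "\<dots> = ((\<integral>\<^sup>+ x. ennreal (p x) \<partial>M) + (\<integral>\<^sup>+ x. ennreal (q x) \<partial>M)) / 2"
    using p(1) q(1) by (simp add: divide_ennreal_def nn_integral_multc nn_integral_add)
  also have "\<dots> = 1"
    using p(3) q(3) by (simp add: one_add_one[symmetric] del: one_add_one)
  finally show ?thesis .
qed

lemma nn_integral_sqrt_eq_bhattacharyya:
  assumes "prob_density M p" and "prob_density M q"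
  shows "(\<integral>\<^sup>+ x. ennreal (sqrt (p x * q x)) \<partial>M) = ennreal (bhattacharyya M p q)"
proof -
  note p = prob_densityD[OF assms(1)] and q = prob_densityD[OF assms(2)]
  have "integrable M (\<lambda>x. sqrt (p x * q x))"
  proof (rule integrableI_bounded)
    show "(\<lambda>x. sqrt (p x * q x)) \<in> borel_measurable M" using p(1) q(1) by measurable
    show "(\<integral>\<^sup>+ x. ennreal (norm (sqrt (p x * q x))) \<partial>M) < \<infinity>"
      using le_less_trans[OF nn_integral_sqrt_le_1[OF assms] ennreal_one_less_top] p(2) q(2)
      by simp
  qed
  then show ?thesis
    unfolding bhattacharyya_def using p(2) q(2) by (intro nn_integral_eq_integral) auto
qed

lemma bhattacharyya_nonneg:
  assumes "\<And>x. 0 \<le> p x" and "\<And>x. 0 \<le> q x"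
  shows "0 \<le> bhattacharyya M p q"
  unfolding bhattacharyya_def using assms by (intro integral_nonneg_AE) auto

lemma bhattacharyya_le_1:
  assumes "prob_density M p" and "prob_density M q"
  shows "bhattacharyya M p q \<le> 1"
  using nn_integral_sqrt_le_1[OF assms] bhattacharyya_nonneg[of p q M]
  unfolding nn_integral_sqrt_eq_bhattacharyya[OF assms]
  by (simp add: prob_densityD[OF assms(1)] prob_densityD[OF assms(2)])

definition discordant_pairs :: "nat \<Rightarrow> nat set \<Rightarrow> nat set \<Rightarrow> (nat \<times> nat) set" where
  "discordant_pairs n S T = {e \<in> pairs n. same_comm S e \<noteq> same_comm T e}"

lemma finite_pairs: "finite (pairs n)"
  by (rule finite_subset[of _ "{..<2 * n} \<times> {..<2 * n}"]) (auto simp: pairs_def)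

lemma finite_balanced: "finite (balanced n)"
  by (rule finite_subset[of _ "Pow {..<2 * n}"]) (auto simp: balanced_def)

lemma balancedD:
  assumes "S \<in> balanced n"
  shows "S \<subseteq> {..<2 * n}" and "finite S" and "card S = n"
  using assms finite_subset[of S "{..<2 * n}"] by (auto simp: balanced_def)

lemma compl_balanced:
  assumes "T \<in> balanced n"
  shows "{..<2 * n} - T \<in> balanced n"
  using card_Diff_subset[OF balancedD(2,1)[OF assms]] balancedD(3)[OF assms]
  by (simp add: balanced_def)

lemma likelihood_compl: "likelihood p q n ({..<2 * n} - T) w = likelihood p q n T w"
  unfolding likelihood_def by (intro prod.cong) (auto simp: pairs_def same_comm_def)

lemma card_diff_balanced_le:
  assumes "S \<in> balanced n"
  shows "card (S - T) \<le> n"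
  using card_mono[OF balancedD(2)[OF assms] Diff_subset] balancedD(3)[OF assms] by simp

lemma card_diff_balanced_commute:
  assumes "S \<in> balanced n" and "T \<in> balanced n"
  shows "card (T - S) = card (S - T)"
  using assms by (simp add: card_Diff_subset_Int balancedD Int_commute)

lemma card_diff_compl_balanced:
  assumes "S \<in> balanced n" and "T \<in> balanced n"
  shows "card (S - ({..<2 * n} - T)) = n - card (S - T)"
proof -
  have "S - ({..<2 * n} - T) = S \<inter> T" using balancedD(1)[OF assms(1)] by auto
  moreover have "card (S \<inter> T) \<le> n"
    using card_mono[OF balancedD(2)[OF assms(1)] Int_lower1[of S T]] balancedD(3)[OF assms(1)]
    by simp
  ultimately show ?thesis using assms by (simp add: card_Diff_subset_Int balancedD)
qed

lemma balanced_eq_if_card_diff_eq_0: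
  assumes "S \<in> balanced n" and "T \<in> balanced n" and "card (S - T) = 0"
  shows "T = S"
proof -
  have "S \<subseteq> T" using assms(3) balancedD(2)[OF assms(1)] by auto
  then show ?thesis using card_subset_eq balancedD[OF assms(1)] balancedD[OF assms(2)] by metis
qed

text \<open>Since T and its complement have the same likelihood, only assignments within
  distance n/2 of S need to be compared with S.\<close>
lemma balanced_near_representative:
  assumes S: "S \<in> balanced n" and T: "T \<in> balanced n" and "T \<noteq> S" and "T \<noteq> {..<2 * n} - S"
  obtains T' where "T' \<in> {T, {..<2 * n} - T}" and "1 \<le> card (S - T')" and "2 * card (S - T') \<le> n"
proof -
  let ?k = "card (S - T)" and ?Tc = "{..<2 * n} - T"
  have Tc: "?Tc \<in> balanced n" and card_Tc: "card (S - ?Tc) = n - ?k"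
    using compl_balanced[OF T] card_diff_compl_balanced[OF S T] .
  have "?k \<noteq> 0" using balanced_eq_if_card_diff_eq_0[OF S T] \<open>T \<noteq> S\<close> by auto
  moreover have "?k \<noteq> n"
  proof
    assume "?k = n"
    then have "?Tc = S" using balanced_eq_if_card_diff_eq_0[OF S Tc] card_Tc by simp
    then show False using \<open>T \<noteq> {..<2 * n} - S\<close> balancedD(1)[OF T] by auto
  qed
  moreover have "?k \<le> n" using card_diff_balanced_le[OF S] .
  ultimately show ?thesis
    using that[of T] that[of ?Tc] card_Tc by (cases "2 * ?k \<le> n") auto
qed

lemma card_discordant_pairs_ge:
  assumes S: "S \<in> balanced n" and T: "T \<in> balanced n"
  shows "4 * card (S - T) * (n - card (S - T)) \<le> card (discordant_pairs n S T)"
proof -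
  let ?k = "card (S - T)"
  define X where "X = (S - T) \<union> (T - S)"
  define Y where "Y = {..<2 * n} - X"
  have X_sub: "X \<subseteq> {..<2 * n}" using balancedD(1)[OF S] balancedD(1)[OF T] by (auto simp: X_def)
  have card_X: "card X = 2 * ?k"
    unfolding X_def using balancedD(2)[OF S] balancedD(2)[OF T] card_diff_balanced_commute[OF S T]
    by (subst card_Un_disjoint) auto
  have card_Y: "card Y = 2 * n - 2 * ?k"
    unfolding Y_def using X_sub card_X by (simp add: card_Diff_subset finite_subset)
  define g where "g = (\<lambda>(a::nat, b::nat). (min a b, max a b))"
  have "inj_on g (X \<times> Y)"
  proof (rule inj_onI, clarify)
    fix a b a' b' assume "a \<in> X" "b \<in> Y" "a' \<in> X" "b' \<in> Y" and g_eq: "g (a, b) = g (a', b')"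
    have "{a, b} = {min a b, max a b}" "{a', b'} = {min a' b', max a' b'}"
      by (auto simp: min_def max_def)
    with g_eq have "{a, b} = {a', b'}" by (simp add: g_def)
    moreover have "b \<notin> X" "b' \<notin> X" using \<open>b \<in> Y\<close> \<open>b' \<in> Y\<close> by (simp_all add: Y_def)
    ultimately show "a = a' \<and> b = b'" using \<open>a \<in> X\<close> \<open>a' \<in> X\<close> by (metis doubleton_eq_iff)
  qed
  text \<open>A pair with exactly one endpoint in the symmetric difference of S and T is cut by
    exactly one of the two partitions.\<close>
  moreover have "g ` (X \<times> Y) \<subseteq> discordant_pairs n S T"
  proof (intro image_subsetI, clarify)
    fix a b assume a: "a \<in> X" and b: "b \<in> Y"
    have "a \<noteq> b" "a < 2 * n" "b < 2 * n" using a b X_sub by (auto simp: Y_def)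
    then have "g (a, b) \<in> pairs n" by (auto simp: g_def pairs_def min_def max_def)
    moreover have "same_comm U (g (a, b)) \<longleftrightarrow> (a \<in> U \<longleftrightarrow> b \<in> U)" for U
      by (auto simp: g_def same_comm_def min_def max_def)
    moreover have "(a \<in> S \<longleftrightarrow> b \<in> S) \<noteq> (a \<in> T \<longleftrightarrow> b \<in> T)"
      using a b unfolding X_def Y_def by blast
    ultimately show "g (a, b) \<in> discordant_pairs n S T" by (simp add: discordant_pairs_def)
  qed
  ultimately have "card (X \<times> Y) \<le> card (discordant_pairs n S T)"
    by (intro card_inj_on_le) (auto simp: discordant_pairs_def finite_pairs)
  moreover have "card (X \<times> Y) = 4 * ?k * (n - ?k)"
    using card_X card_Y card_diff_balanced_le[OF S]
    by (simp add: card_cartesian_product diff_mult_distrib2 algebra_simps)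
  ultimately show ?thesis by simp
qed

lemma card_balanced_card_diff_eq_le:
  assumes S: "S \<in> balanced n"
  shows "card {T \<in> balanced n. card (S - T) = k} \<le> (n choose k) ^ 2"
proof -
  let ?Sc = "{..<2 * n} - S"
  let ?A = "{A. A \<subseteq> S \<and> card A = k}" and ?C = "{C. C \<subseteq> ?Sc \<and> card C = k}"
  have card_A: "card ?A = n choose k"
    using n_subsets[OF balancedD(2)[OF S]] balancedD(3)[OF S] by simp
  have card_C: "card ?C = n choose k"
    using n_subsets[of ?Sc] balancedD(3)[OF compl_balanced[OF S]] by simp
  have "inj_on (\<lambda>T. (S - T, T - S)) {T \<in> balanced n. card (S - T) = k}"
  proof (rule inj_onI)
    fix T T' assume "(S - T, T - S) = (S - T', T' - S)"
    then have "S - T = S - T'" and "T - S = T' - S" by simp_all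
    then show "T = T'" by blast
  qed
  moreover have "(\<lambda>T. (S - T, T - S)) ` {T \<in> balanced n. card (S - T) = k} \<subseteq> ?A \<times> ?C"
  proof (rule image_subsetI)
    fix T assume T: "T \<in> {T \<in> balanced n. card (S - T) = k}"
    then have "card (T - S) = k" using card_diff_balanced_commute[OF S] by auto
    then show "(S - T, T - S) \<in> ?A \<times> ?C" using T balancedD(1)[of T n] by auto
  qed
  moreover have "finite (?A \<times> ?C)"
    using balancedD(2)[OF S] by (auto intro: finite_subset[of _ "Pow S"] finite_subset[of _ "Pow ?Sc"])
  ultimately have "card {T \<in> balanced n. card (S - T) = k} \<le> card (?A \<times> ?C)"
    by (rule card_inj_on_le)
  then show ?thesis using card_A card_C by (simp add: card_cartesian_product power2_eq_square)
qed

lemma mle_recovers_if_likelihood_less: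
  assumes S: "S \<in> balanced n"
    and less: "\<And>T. T \<in> balanced n \<Longrightarrow> 1 \<le> card (S - T) \<Longrightarrow> 2 * card (S - T) \<le> n
      \<Longrightarrow> likelihood p q n T w < likelihood p q n S w"
  shows "mle_recovers p q n S w"
proof -
  let ?L = "\<lambda>T. likelihood p q n T w" and ?Sc = "{..<2 * n} - S"
  have strict: "?L T < ?L S" if T: "T \<in> balanced n" "T \<noteq> S" "T \<noteq> ?Sc" for T
  proof -
    obtain T' where T': "T' \<in> {T, {..<2 * n} - T}" "1 \<le> card (S - T')" "2 * card (S - T') \<le> n"
      using balanced_near_representative[OF S T] .
    then have "T' \<in> balanced n" using compl_balanced[OF T(1)] T(1) by auto
    then have "?L T' < ?L S" using less T'(2,3) by blast
    moreover have "?L T' = ?L T" using T'(1) likelihood_compl[of p q n T w] by auto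
    ultimately show ?thesis by simp
  qed
  have "?L T \<le> ?L S" if "T \<in> balanced n" for T
    using strict[OF that] likelihood_compl[of p q n S w] by (cases "T \<in> {S, ?Sc}") auto
  then have "mle_set p q n w = {S, ?Sc}"
    using S compl_balanced[OF S] strict likelihood_compl[of p q n S w]
    unfolding mle_set_def by (auto simp: not_le[symmetric])
  then show ?thesis by (simp add: mle_recovers_def)
qed

lemma prob_space_wsbm:
  assumes "prob_density M p" and "prob_density M q"
  shows "prob_space (wsbm M p q n S)"
  unfolding wsbm_def
proof (intro prob_space_PiM prob_spaceI)
  fix e
  show "emeasure (density M (\<lambda>x. ennreal (if same_comm S e then p x else q x)))
      (space (density M (\<lambda>x. ennreal (if same_comm S e then p x else q x)))) = 1"
    using prob_densityD[OF assms(1)] prob_densityD[OF assms(2)]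
    by (cases "same_comm S e") (auto simp: emeasure_density)
qed

lemma measurable_likelihood:
  assumes "p \<in> borel_measurable M" and "q \<in> borel_measurable M"
  shows "likelihood p q n T \<in> borel_measurable (wsbm M p q n S)"
  unfolding likelihood_def wsbm_def using assms by measurable

lemma mle_recovers_iff:
  "mle_recovers p q n S w \<longleftrightarrow> {S, {..<2 * n} - S} \<subseteq> balanced n \<and>
     (\<forall>T\<in>balanced n. (\<forall>T'\<in>balanced n. likelihood p q n T' w \<le> likelihood p q n T w)
        \<longleftrightarrow> T \<in> {S, {..<2 * n} - S})"
  unfolding mle_recovers_def mle_set_def by blast

lemma pred_mle_recovers:
  assumes "p \<in> borel_measurable M" and "q \<in> borel_measurable M"
  shows "Measurable.pred (wsbm M p q n S) (mle_recovers p q n S)"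
proof -
  have "Measurable.pred (wsbm M p q n S) (\<lambda>w. likelihood p q n T' w \<le> likelihood p q n T w)" for T T'
    unfolding pred_def by (intro borel_measurable_le measurable_likelihood assms)
  then show ?thesis unfolding mle_recovers_iff using finite_balanced by measurable
qed

lemma measure_likelihood_le_bhattacharyya_power:
  assumes "sigma_finite_measure M" and "prob_density M p" and "prob_density M q"
  shows "measure (wsbm M p q n S)
      {w \<in> space (wsbm M p q n S). likelihood p q n S w \<le> likelihood p q n T w}
    \<le> bhattacharyya M p q ^ card (discordant_pairs n S T)"
proof -
  interpret P: prob_space "wsbm M p q n S" using prob_space_wsbm[OF assms(2,3)] .
  note p = prob_densityD[OF assms(2)] and q = prob_densityD[OF assms(3)]
  let ?B = "bhattacharyya M p q"
  define a where "a = (\<lambda>e x. if same_comm S e then p x else q x)"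
  define b where "b = (\<lambda>e x. if same_comm T e then p x else q x)"
  have a_b: "\<And>e. a e \<in> borel_measurable M" "\<And>e. b e \<in> borel_measurable M"
    "\<And>e x. 0 \<le> a e x" "\<And>e x. 0 \<le> b e x"
    using p q by (simp_all add: a_def b_def)
  have B: "(\<integral>\<^sup>+ x. ennreal (sqrt (p x * q x)) \<partial>M) = ennreal ?B"
    "(\<integral>\<^sup>+ x. ennreal (sqrt (q x * p x)) \<partial>M) = ennreal ?B"
    using nn_integral_sqrt_eq_bhattacharyya[OF assms(2,3)] by (simp_all add: mult.commute)
  have factor: "(\<integral>\<^sup>+ x. ennreal (sqrt (a e x * b e x)) \<partial>M)
      = (if same_comm S e \<noteq> same_comm T e then ennreal ?B else 1)" for e
  proof (cases "same_comm S e = same_comm T e")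
    case True
    then have "sqrt (a e x * b e x) = a e x" for x using a_b(3)[of e x] by (simp add: a_def b_def)
    then show ?thesis using True p(3) q(3) by (cases "same_comm T e") (simp_all add: a_def)
  next
    case False
    then show ?thesis using B by (cases "same_comm S e") (simp_all add: a_def b_def)
  qed
  have "emeasure (wsbm M p q n S)
      {w \<in> space (wsbm M p q n S). likelihood p q n S w \<le> likelihood p q n T w}
    = emeasure (PiM (pairs n) (\<lambda>e. density M (\<lambda>x. ennreal (a e x))))
      {w \<in> space (PiM (pairs n) (\<lambda>e. density M (\<lambda>x. ennreal (a e x)))).
        (\<Prod>e\<in>pairs n. a e (w e)) \<le> (\<Prod>e\<in>pairs n. b e (w e))}"
    by (simp add: wsbm_def likelihood_def a_def b_def)
  also have "\<dots> \<le> (\<Prod>e\<in>pairs n. \<integral>\<^sup>+ x. ennreal (sqrt (a e x * b e x)) \<partial>M)"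
    by (rule emeasure_PiM_density_prod_le_prod_sqrt[OF assms(1) finite_pairs a_b])
  also have "\<dots> = ennreal (?B ^ card (discordant_pairs n S T))"
    by (simp add: factor discordant_pairs_def prod.inter_filter[symmetric] finite_pairs
        ennreal_power bhattacharyya_nonneg p(2) q(2))
  finally show ?thesis
    using P.emeasure_eq_measure
    by (simp add: bhattacharyya_nonneg p(2) q(2))
qed

definition mle_error_bound :: "nat \<Rightarrow> real \<Rightarrow> real" where
  "mle_error_bound n B = (\<Sum>k=1..n div 2. real (n choose k) ^ 2 * B ^ (4 * k * (n - k)))"

lemma sum_near_balanced_le:
  fixes f :: "nat \<Rightarrow> real"
  assumes S: "S \<in> balanced n" and f_nonneg: "\<And>k. 0 \<le> f k"
  shows "(\<Sum>T\<in>{T \<in> balanced n. 1 \<le> card (S - T) \<and> 2 * card (S - T) \<le> n}. f (card (S - T)))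
    \<le> (\<Sum>k=1..n div 2. real (n choose k) ^ 2 * f k)"
proof -
  let ?Near = "{T \<in> balanced n. 1 \<le> card (S - T) \<and> 2 * card (S - T) \<le> n}"
  have "(\<Sum>T\<in>?Near. f (card (S - T)))
      = (\<Sum>k=1..n div 2. \<Sum>T\<in>{T \<in> ?Near. card (S - T) = k}. f (card (S - T)))"
    by (rule sum.group[symmetric]) (auto simp: finite_balanced)
  also have "\<dots> = (\<Sum>k=1..n div 2. real (card {T \<in> balanced n. card (S - T) = k}) * f k)"
  proof (rule sum.cong)
    fix k assume "k \<in> {1..n div 2}"
    then have "{T \<in> ?Near. card (S - T) = k} = {T \<in> balanced n. card (S - T) = k}" by auto
    then show "(\<Sum>T\<in>{T \<in> ?Near. card (S - T) = k}. f (card (S - T)))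
        = real (card {T \<in> balanced n. card (S - T) = k}) * f k" by simp
  qed simp
  also have "\<dots> \<le> (\<Sum>k=1..n div 2. real (n choose k) ^ 2 * f k)"
    using card_balanced_card_diff_eq_le[OF S] f_nonneg
    by (intro sum_mono mult_right_mono) (simp_all add: of_nat_power[symmetric] del: of_nat_power)
  finally show ?thesis .
qed

lemma measure_mle_recovers_ge:
  assumes "sigma_finite_measure M" and p: "prob_density M p" and q: "prob_density M q"
    and S: "S \<in> balanced n"
  shows "1 - mle_error_bound n (bhattacharyya M p q)
    \<le> measure (wsbm M p q n S) {w \<in> space (wsbm M p q n S). mle_recovers p q n S w}"
proof -
  let ?P = "wsbm M p q n S" and ?B = "bhattacharyya M p q"
  let ?Near = "{T \<in> balanced n. 1 \<le> card (S - T) \<and> 2 * card (S - T) \<le> n}"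
  interpret P: prob_space ?P using prob_space_wsbm[OF p q] .
  note meas = prob_densityD(1)[OF p] prob_densityD(1)[OF q]
  define E where "E T = {w \<in> space ?P. likelihood p q n S w \<le> likelihood p q n T w}" for T
  define R where "R = {w \<in> space ?P. mle_recovers p q n S w}"
  have B: "0 \<le> ?B" "?B \<le> 1"
    using bhattacharyya_nonneg[OF prob_densityD(2)[OF p] prob_densityD(2)[OF q]] bhattacharyya_le_1[OF p q]
    by auto
  have E_events: "E T \<in> P.events" for T
    unfolding E_def using measurable_likelihood[OF meas] by measurable
  have R_event: "R \<in> P.events"
    unfolding R_def using pred_mle_recovers[OF meas] by measurable
  have "space ?P - R \<subseteq> (\<Union>T\<in>?Near. E T)"
    using mle_recovers_if_likelihood_less[OF S] by (fastforce simp: R_def E_def not_le)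
  then have "P.prob (space ?P - R) \<le> P.prob (\<Union>T\<in>?Near. E T)"
    using E_events finite_balanced by (intro P.finite_measure_mono) auto
  then have "1 - P.prob R \<le> P.prob (\<Union>T\<in>?Near. E T)"
    using P.prob_compl[OF R_event] by simp
  also have "\<dots> \<le> (\<Sum>T\<in>?Near. P.prob (E T))"
    using E_events finite_balanced by (intro measure_UNION_le) auto
  also have "\<dots> \<le> (\<Sum>T\<in>?Near. ?B ^ (4 * card (S - T) * (n - card (S - T))))"
  proof (rule sum_mono)
    fix T assume "T \<in> ?Near"
    then have "P.prob (E T) \<le> ?B ^ card (discordant_pairs n S T)"
      unfolding E_def by (intro measure_likelihood_le_bhattacharyya_power assms(1) p q)
    also have "\<dots> \<le> ?B ^ (4 * card (S - T) * (n - card (S - T)))"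
      using card_discordant_pairs_ge[OF S] \<open>T \<in> ?Near\<close> B by (intro power_decreasing) auto
    finally show "P.prob (E T) \<le> ?B ^ (4 * card (S - T) * (n - card (S - T)))" .
  qed
  also have "\<dots> \<le> mle_error_bound n ?B"
    unfolding mle_error_bound_def using sum_near_balanced_le[OF S, of "\<lambda>k. ?B ^ (4 * k * (n - k))"] B
    by simp
  finally show ?thesis by (simp add: R_def)
qed

lemma mle_error_term_le:
  fixes b c eps d :: real and n k :: nat
  assumes n: "2 \<le> n" and c: "0 < c" and eps: "0 < eps" and cd: "c * (1 - eps) = 1 + d"
    and b: "0 \<le> b" "b \<le> real n powr (- c / (2 * n))"
    and k: "1 \<le> k" "2 * k \<le> n"
  shows "real (n choose k) ^ 2 * b ^ (4 * k * (n - k))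
    \<le> (real n powr (- 2 * d)) ^ k + (4 * real n powr (- c * eps)) ^ n"
proof -
  define N m where "N = real n" and "m = real k"
  have N: "2 \<le> N" and m: "1 \<le> m" "2 * m \<le> N" using n k by (simp_all add: N_def m_def)
  have pow_N: "(N powr a) ^ j = N powr (a * real j)" for a j
    using N by (simp add: powr_realpow[symmetric] powr_powr)
  have b_pow: "b ^ (4 * k * (n - k)) \<le> N powr (- (2 * c * m * (N - m) / N))"
  proof -
    have "b ^ (4 * k * (n - k)) \<le> (N powr (- c / (2 * N))) ^ (4 * k * (n - k))"
      using b by (intro power_mono) (simp_all add: N_def)
    also have "\<dots> = N powr (- (2 * c * m * (N - m) / N))"
      unfolding pow_N using k N
      by (intro arg_cong[where f="(powr) N"]) (simp add: N_def m_def of_nat_diff field_simps)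
    finally show ?thesis .
  qed
  have nonneg: "0 \<le> (N powr (- 2 * d)) ^ k" "0 \<le> (4 * N powr (- c * eps)) ^ n" by simp_all
  show ?thesis
  proof (cases "m \<le> eps * N")
    case True
    have "real (n choose k) \<le> N powr m"
      using binomial_le_pow[of k n] k N unfolding N_def m_def
      by (simp add: powr_realpow flip: of_nat_power)
    then have "real (n choose k) ^ 2 \<le> (N powr m) ^ 2" by (intro power_mono) auto
    also have "\<dots> = N powr (2 * m)" by (simp add: pow_N mult.commute)
    finally have binom: "real (n choose k) ^ 2 \<le> N powr (2 * m)" .
    have "1 - eps \<le> (N - m) / N" using True N by (simp add: field_simps)
    then have "(1 + d) * m \<le> c * ((N - m) / N) * m"
      using c m unfolding cd[symmetric] by (intro mult_right_mono mult_left_mono) auto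
    then have exponent: "2 * m - 2 * c * m * (N - m) / N \<le> - 2 * d * m"
      using N by (simp add: field_simps)
    have "real (n choose k) ^ 2 * b ^ (4 * k * (n - k))
        \<le> N powr (2 * m) * N powr (- (2 * c * m * (N - m) / N))"
      using binom b_pow b(1) by (intro mult_mono) auto
    also have "\<dots> \<le> N powr (- 2 * d * m)"
      using exponent N by (simp add: powr_add[symmetric])
    also have "\<dots> = (N powr (- 2 * d)) ^ k" by (simp add: pow_N m_def)
    finally show ?thesis using nonneg(2) unfolding N_def by linarith
  next
    case False
    have "real (n choose k) ^ 2 \<le> (2 ^ n) ^ 2"
      using binomial_le_pow2[of n k] by (intro power_mono) (simp_all flip: of_nat_power)
    also have "\<dots> = (2 ^ 2) ^ n" by (simp only: power_mult[symmetric] mult.commute)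
    also have "\<dots> = 4 ^ n" by simp
    finally have binom: "real (n choose k) ^ 2 \<le> 4 ^ n" .
    have "eps * N * (N / 2) \<le> m * (N - m)"
      using False eps N m by (intro mult_mono) auto
    then have "2 * c * (eps * N * (N / 2)) / N \<le> 2 * c * (m * (N - m)) / N"
      using c N by (intro divide_right_mono mult_left_mono) auto
    then have exponent: "c * eps * N \<le> 2 * c * m * (N - m) / N"
      using N by (simp add: mult.assoc)
    have "real (n choose k) ^ 2 * b ^ (4 * k * (n - k))
        \<le> 4 ^ n * N powr (- (2 * c * m * (N - m) / N))"
      using binom b_pow b(1) by (intro mult_mono) auto
    also have "\<dots> \<le> 4 ^ n * N powr (- c * eps * N)"
      using exponent N by (intro mult_left_mono powr_mono) auto
    also have "\<dots> = (4 * N powr (- c * eps)) ^ n" by (simp add: power_mult_distrib pow_N N_def[symmetric])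
    finally show ?thesis using nonneg(1) unfolding N_def by linarith
  qed
qed

lemma sum_power_atLeastAtMost_1_le:
  fixes r :: real
  assumes "0 \<le> r" and "r < 1"
  shows "(\<Sum>k=1..m. r ^ k) \<le> r / (1 - r)"
proof (cases "m = 0")
  case False
  then have "(\<Sum>k=1..m. r ^ k) = (r - r ^ Suc m) / (1 - r)" using assms by (simp add: sum_gp)
  also have "\<dots> \<le> r / (1 - r)" using assms by (intro divide_right_mono) auto
  finally show ?thesis .
qed (use assms in simp)

lemma mle_error_bound_tendsto_0:
  fixes B :: "nat \<Rightarrow> real"
  assumes c: "1 < c" and B_nonneg: "\<And>n. 0 \<le> B n"
    and B_le: "eventually (\<lambda>n. B n \<le> real n powr (- c / (2 * n))) sequentially"
  shows "(\<lambda>n. mle_error_bound n (B n)) \<longlonglongrightarrow> 0"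
proof -
  define eps d where "eps = (c - 1) / (2 * c)" and "d = (c - 1) / 2"
  have eps: "0 < eps" and d: "0 < d" and cd: "c * (1 - eps) = 1 + d"
    using c by (auto simp: eps_def d_def field_simps)
  define r s where "r n = real n powr (- 2 * d)" and "s n = 4 * real n powr (- c * eps)" for n
  have r: "r \<longlonglongrightarrow> 0"
    unfolding r_def using d by (intro tendsto_neg_powr filterlim_real_sequentially) auto
  have s: "s \<longlonglongrightarrow> 0"
    unfolding s_def using c eps
    by (intro tendsto_mult_right_zero tendsto_neg_powr filterlim_real_sequentially) auto
  have s_small: "eventually (\<lambda>n. s n < 1 / 2) sequentially"
    using s by (rule order_tendstoD) simp
  have r_small: "eventually (\<lambda>n. r n < 1) sequentially"
    using r by (rule order_tendstoD) simp
  have "(\<lambda>n. real n * s n ^ n) \<longlonglongrightarrow> 0"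
  proof (rule tendsto_sandwich[of "\<lambda>_. 0" _ _ "\<lambda>n. real n * (1 / 2) ^ n"])
    show "eventually (\<lambda>n. real n * s n ^ n \<le> real n * (1 / 2) ^ n) sequentially"
      using s_small
    proof eventually_elim
      case (elim n)
      then have "s n ^ n \<le> (1 / 2) ^ n" by (intro power_mono) (simp_all add: s_def)
      then show ?case by (intro mult_left_mono) auto
    qed
    show "(\<lambda>n. real n * (1 / 2 :: real) ^ n) \<longlonglongrightarrow> 0" by (rule powser_times_n_limit_0) simp
  qed (auto simp: s_def)
  then have bound: "(\<lambda>n. r n / (1 - r n) + real n * s n ^ n) \<longlonglongrightarrow> 0"
    using tendsto_add[OF tendsto_divide[OF r tendsto_diff[OF tendsto_const r]]] by fastforce
  show ?thesis
  proof (rule tendsto_sandwich[OF _ _ tendsto_const bound])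
    show "eventually (\<lambda>n. 0 \<le> mle_error_bound n (B n)) sequentially"
      unfolding mle_error_bound_def using B_nonneg by (intro always_eventually allI sum_nonneg) auto
    show "eventually (\<lambda>n. mle_error_bound n (B n) \<le> r n / (1 - r n) + real n * s n ^ n) sequentially"
      using B_le eventually_ge_at_top[of 2] r_small
    proof eventually_elim
      case (elim n)
      have "mle_error_bound n (B n) \<le> (\<Sum>k=1..n div 2. r n ^ k + s n ^ n)"
        unfolding mle_error_bound_def r_def s_def
      proof (rule sum_mono)
        fix k assume "k \<in> {1..n div 2}"
        then show "real (n choose k) ^ 2 * B n ^ (4 * k * (n - k))
            \<le> (real n powr (- 2 * d)) ^ k + (4 * real n powr (- c * eps)) ^ n"
          using c by (intro mle_error_term_le[OF elim(2) _ eps cd B_nonneg elim(1)]) auto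
      qed
      also have "\<dots> = (\<Sum>k=1..n div 2. r n ^ k) + real (n div 2) * s n ^ n"
        by (simp add: sum.distrib)
      also have "\<dots> \<le> r n / (1 - r n) + real n * s n ^ n"
        using elim(3) by (intro add_mono sum_power_atLeastAtMost_1_le mult_right_mono)
          (auto simp: r_def s_def)
      finally show ?case .
    qed
  qed
qed

lemma eventually_bhattacharyya_le_powr:
  assumes B_nonneg: "\<And>n. 0 \<le> bhattacharyya M (p n) (q n)"
    and lim: "liminf (\<lambda>n. ereal (real n) * renyi_half M (p n) (q n) / ereal (ln (real n))) > 1"
  obtains c where "1 < c"
    and "eventually (\<lambda>n. bhattacharyya M (p n) (q n) \<le> real n powr (- c / (2 * n))) sequentially"
proof -
  obtain c where c: "1 < ereal c"
    and c_lim: "ereal c < liminf (\<lambda>n. ereal (real n) * renyi_half M (p n) (q n) / ereal (ln (real n)))"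
    using ereal_dense2[OF lim] by blast
  from c_lim have "eventually (\<lambda>n. ereal c < ereal (real n) * renyi_half M (p n) (q n) / ereal (ln (real n)))
      sequentially"
    by (rule less_LiminfD)
  then have "eventually (\<lambda>n. bhattacharyya M (p n) (q n) \<le> real n powr (- c / (2 * n))) sequentially"
    using eventually_ge_at_top[of 2]
  proof eventually_elim
    case (elim n)
    let ?B = "bhattacharyya M (p n) (q n)"
    show ?case
    proof (cases "?B = 0")
      case False
      then have "0 < ?B" using B_nonneg[of n] by simp
      have "0 < ln (real n)" using elim(2) by simp
      moreover have "renyi_half M (p n) (q n) = ereal (- 2 * ln ?B)"
        using False by (simp add: renyi_half_def)
      ultimately have "c < real n * (- 2 * ln ?B) / ln (real n)"
        using elim(1) by (simp add: divide_ereal_def divide_inverse)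
      then have "c * ln (real n) < real n * (- 2 * ln ?B)"
        using \<open>0 < ln (real n)\<close> by (simp add: field_simps)
      then have "ln ?B < - c / (2 * n) * ln (real n)"
        using elim(2) by (simp add: field_simps)
      then have "exp (ln ?B) < exp (- c / (2 * n) * ln (real n))"
        by (rule exp_less_mono)
      then show ?thesis
        using \<open>0 < ?B\<close> elim(2) by (simp add: powr_def)
    qed simp
  qed
  with c show thesis by (intro that) auto
qed

theorem corollary1:
  fixes M :: "'a measure" and p q :: "nat \<Rightarrow> 'a \<Rightarrow> real" and S :: "nat \<Rightarrow> nat set"
  assumes "sigma_finite_measure M"
    and "\<forall>n. p n \<in> borel_measurable M \<and> q n \<in> borel_measurable M"
    and "\<forall>n x. 0 \<le> p n x \<and> 0 \<le> q n x"
    and "\<forall>n. (\<integral>\<^sup>+ x. ennreal (p n x) \<partial>M) = 1 \<and> (\<integral>\<^sup>+ x. ennreal (q n x) \<partial>M) = 1"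
    and "\<forall>n. S n \<in> balanced n"
    and "liminf (\<lambda>n. ereal (real n) * renyi_half M (p n) (q n) / ereal (ln (real n))) > 1"
  shows "(\<lambda>n. measure (wsbm M (p n) (q n) n (S n))
            {w \<in> space (wsbm M (p n) (q n) n (S n)). mle_recovers (p n) (q n) n (S n) w})
         \<longlonglongrightarrow> 1"
proof -
  have p: "prob_density M (p n)" and q: "prob_density M (q n)" for n
    using assms(2-4) by (simp_all add: prob_density_def)
  define B where "B n = bhattacharyya M (p n) (q n)" for n
  have B_nonneg: "0 \<le> B n" for n
    unfolding B_def using prob_densityD(2)[OF p] prob_densityD(2)[OF q] by (rule bhattacharyya_nonneg)
  obtain c where "1 < c" and "eventually (\<lambda>n. B n \<le> real n powr (- c / (2 * n))) sequentially"
    using eventually_bhattacharyya_le_powr[OF B_nonneg[unfolded B_def] assms(6)] unfolding B_def .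
  then have "(\<lambda>n. mle_error_bound n (B n)) \<longlonglongrightarrow> 0"
    using B_nonneg by (intro mle_error_bound_tendsto_0)
  then have error: "(\<lambda>n. 1 - mle_error_bound n (B n)) \<longlonglongrightarrow> 1"
    using tendsto_diff[OF tendsto_const] by fastforce
  define P where "P n = measure (wsbm M (p n) (q n) n (S n))
      {w \<in> space (wsbm M (p n) (q n) n (S n)). mle_recovers (p n) (q n) n (S n) w}" for n
  have "1 - mle_error_bound n (B n) \<le> P n" for n
    unfolding B_def P_def by (rule measure_mle_recovers_ge[OF assms(1) p q assms(5)[rule_format]])
  moreover have "P n \<le> 1" for n
    unfolding P_def by (rule prob_space.prob_le_1[OF prob_space_wsbm[OF p q]])
  ultimately have "P \<longlonglongrightarrow> 1"
    by (intro tendsto_sandwich[OF _ _ error tendsto_const] always_eventually allI)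
  then show ?thesis unfolding P_def .
qed

end
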